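(* In the standing setting below, suppose $c$ does not satisfy Loeper's property. Then there exist $y_0,y_1$ in the interior of $\mathbb{Y}$, $x_0,x_1$ in the interior of $\mathbb{X}$, $h_1'\in\mathbb{R}$, and a point $x_{t_0}=\exp^c_{y_0}(t_0p_1+(1-t_0)p_0)$ with $t_0\in(0,1)$, where $p_i=-D_yc(x_i,y_0)$, such that $-c(x_i,y_1)+h_1'<-c(x_i,y_0)$ for $i=0,1$, and $-c(x_{t_0},y_1)+h_1'>-c(x_{t_0},y_0)$.
   Context: Standing setting: $\mathbb{X},\mathbb{Y}\subset\mathbb{R}^n$ are compact with non-empty interior; $c:\mathbb{X}\times\mathbb{Y}\to\mathbb{R}$ has continuous $D_xc$, $D_yc$, and continuous mixed second derivatives with $D^2_{xy}c=(D^2_{yx}c)^T$; for each $x$ the map $y\mapsto -D_xc(x,y)$ is injective on $\mathbb{Y}$ and for each $y$ the map $x\mapsto -D_yc(x,y)$ is injective on $\mathbb{X}$; $D^2_{xy}c(x,y)$ is invertible everywhere; for every $y$ the set $[\mathbb{X}]_y=\{-D_yc(x,y):x\in\mathbb{X}\}$ is convex and for every $x$ the set $\{-D_xc(x,y):y\in\mathbb{Y}\}$ is convex. $\exp^c_y:[\mathbb{X}]_y\to\mathbb{X}$ is the inverse of $x\mapsto -D_yc(x,y)$; the $c$-segment with respect to $y$ from $x_0$ to $x_1$ is $\{\exp^c_y(tp_1+(1-t)p_0):t\in[0,1]\}$ with $p_i=-D_yc(x_i,y)$. Loeper's property: for all $x_0,x_1\in\mathbb{X}$, $y_0,y\in\mathbb{Y}$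 and every $x_t$ on the $c$-segment with respect to $y_0$ from $x_0$ to $x_1$, $-c(x_t,y)+c(x_t,y_0)\le\max\{-c(x_i,y)+c(x_i,y_0):i=0,1\}$. *)

theory Defs
  imports "HOL-Analysis.Analysis"
begin

text \<open>The c-exponential map with respect to y: the inverse of x \<mapsto> - D_y c(x,y) on X,
  defined on [X]_y.  Here Dy x y stands for D_y c(x,y).\<close>
definition cexp :: "('a::euclidean_space \<Rightarrow> 'a \<Rightarrow> 'a) \<Rightarrow> 'a set \<Rightarrow> 'a \<Rightarrow> 'a \<Rightarrow> 'a" where
  "cexp Dy X y p = inv_into X (\<lambda>x. - Dy x y) p"

definition loeper :: "('a::euclidean_space \<Rightarrow> 'a \<Rightarrow> real) \<Rightarrow> ('a \<Rightarrow> 'a \<Rightarrow> 'a) \<Rightarrow> 'a set \<Rightarrow> 'a set \<Rightarrow> bool" where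
  "loeper c Dy X Y \<longleftrightarrow>
     (\<forall>x0\<in>X. \<forall>x1\<in>X. \<forall>y0\<in>Y. \<forall>y\<in>Y. \<forall>t\<in>{0..1::real}.
        (let xt = cexp Dy X y0 (t *\<^sub>R (- Dy x1 y0) + (1 - t) *\<^sub>R (- Dy x0 y0))
         in - c xt y + c xt y0 \<le> max (- c x0 y + c x0 y0) (- c x1 y + c x1 y0)))"

end

theory Submission
  imports Defs "HOL-Homology.Invariance_of_Domain"
begin

text \<open>A failure of Loeper's property is witnessed by a strictly positive value of the continuous
  function \<open>loeper_defect\<close> at some point of \<open>X \<times> X \<times> Y \<times> Y\<close>; the endpoints
  \<open>t = 0, 1\<close> of the \<open>c\<close>-segment can never witness it.  By invariance of domain, a compact set
  mapped injectively and continuously onto a convex set with non-empty interior is the closure of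
  its interior, so \<open>X\<close> and \<open>Y\<close> are, and the positive value persists at a nearby interior
  point.  Any level \<open>h\<^sub>1'\<close> strictly between the two sides of the violated inequality then
  separates the endpoints from the intermediate point.  Only continuity of \<open>c\<close>, \<open>D\<^sub>xc\<close>,
  \<open>D\<^sub>yc\<close>, the twist conditions and the convexity of the gradient images are needed.\<close>

lemma closure_interior_eq_of_inj_convex_image:
  fixes A :: "'a::euclidean_space set" and f :: "'a \<Rightarrow> 'a"
  assumes "compact A" "interior A \<noteq> {}"
    and f: "continuous_on A f" "inj_on f A" and conv: "convex (f ` A)"
  shows "closure (interior A) = A"
proof -
  define g where "g = inv_into A f"
  have g: "continuous_on (f ` A) g" "inj_on g (f ` A)" and gf: "g ` f ` A = A"
    using continuous_on_inv[OF f(1) \<open>compact A\<close>] f(2)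
    by (auto simp: g_def inj_on_inv_into)
  have "f ` interior A \<subseteq> interior (f ` A)"
    using continuous_image_subset_interior[OF f] by simp
  with \<open>interior A \<noteq> {}\<close> have "interior (f ` A) \<noteq> {}" by blast
  then have closure_int: "closure (interior (f ` A)) = f ` A"
    using convex_closure_interior[OF conv] compact_continuous_image[OF f(1) \<open>compact A\<close>]
    by (simp add: compact_imp_closed)
  have "g ` interior (f ` A) \<subseteq> interior A"
    using continuous_image_subset_interior[OF g] gf by simp
  then have "g ` closure (interior (f ` A)) \<subseteq> closure (interior A)"
    using g(1) closure_subset by (intro image_closure_subset) (auto simp: closure_int)
  then have "A \<subseteq> closure (interior A)"
    by (simp add: closure_int gf)
  moreover have "closure (interior A) \<subseteq> A"
    using \<open>compact A\<close> by (simp add: closure_minimal compact_imp_closed interior_subset)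
  ultimately show ?thesis by blast
qed

lemma continuous_on_pos_at_interior_point:
  fixes f :: "'a::metric_space \<Rightarrow> real"
  assumes "continuous_on S f" "z \<in> S" "z \<in> closure (interior S)" "f z > 0"
  obtains w where "w \<in> interior S" "f w > 0"
proof -
  obtain d where "d > 0" and "\<And>w. w \<in> S \<Longrightarrow> dist w z < d \<Longrightarrow> dist (f w) (f z) < f z"
    using assms(1,2,4) unfolding continuous_on_iff by metis
  moreover obtain w where "w \<in> interior S" "dist w z < d"
    using assms(3) \<open>d > 0\<close> unfolding closure_approachable by blast
  ultimately show ?thesis
    using that interior_subset by (force simp: dist_real_def)
qed

lemma continuous_on_compose_curried:
  assumes "continuous_on (A \<times> B) (\<lambda>z. F (fst z) (snd z))"
    and "continuous_on S f" "continuous_on S g" "f ` S \<subseteq> A" "g ` S \<subseteq> B"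
  shows "continuous_on S (\<lambda>z. F (f z) (g z))"
  using continuous_on_compose2[OF assms(1) continuous_on_Pair[OF assms(2,3)]] assms(4,5)
  by fastforce

lemma cexp_minus_Dy:
  assumes "inj_on (\<lambda>x. - Dy x y) X" "x \<in> X"
  shows "cexp Dy X y (- Dy x y) = x"
  unfolding cexp_def using inv_into_f_f[OF assms] .

lemma cexp_in:
  assumes "p \<in> (\<lambda>x. - Dy x y) ` X"
  shows "cexp Dy X y p \<in> X"
  using assms by (simp add: cexp_def inv_into_into)

lemma continuous_on_cexp:
  fixes Dy :: "'a::euclidean_space \<Rightarrow> 'a \<Rightarrow> 'a"
  assumes "compact X" "compact Y" "continuous_on (X \<times> Y) (\<lambda>z. Dy (fst z) (snd z))"
    and inj: "\<And>y. y \<in> Y \<Longrightarrow> inj_on (\<lambda>x. - Dy x y) X"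
  shows "continuous_on ((\<lambda>z. (- Dy (fst z) (snd z), snd z)) ` (X \<times> Y))
           (\<lambda>q. cexp Dy X (snd q) (fst q))"
proof -
  have "continuous_on ((\<lambda>z. (- Dy (fst z) (snd z), snd z)) ` (X \<times> Y))
          (\<lambda>q. (cexp Dy X (snd q) (fst q), snd q))"
  proof (rule continuous_on_inv)
    show "continuous_on (X \<times> Y) (\<lambda>z. (- Dy (fst z) (snd z), snd z))"
      using assms(3) by (intro continuous_intros) auto
  qed (use assms inj in \<open>auto simp: compact_Times cexp_minus_Dy\<close>)
  from continuous_on_fst[OF this] show ?thesis by simp
qed

lemma c_segment_param_in_image:
  assumes "convex ((\<lambda>x. - Dy x y) ` X)" "x0 \<in> X" "x1 \<in> X" "t \<in> {0..1}"
  shows "t *\<^sub>R (- Dy x1 y) + (1 - t) *\<^sub>R (- Dy x0 y) \<in> (\<lambda>x. - Dy x y) ` X"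
  using convexD[OF assms(1), of "- Dy x1 y" "- Dy x0 y" t "1 - t"] assms(2-4) by auto

lemma continuous_on_cexp_segment:
  fixes Dy :: "'a::euclidean_space \<Rightarrow> 'a \<Rightarrow> 'a"
  assumes "compact X" "compact Y" "t \<in> {0..1}"
    and Dy_cont: "continuous_on (X \<times> Y) (\<lambda>z. Dy (fst z) (snd z))"
    and inj: "\<And>y. y \<in> Y \<Longrightarrow> inj_on (\<lambda>x. - Dy x y) X"
    and conv: "\<And>y. y \<in> Y \<Longrightarrow> convex ((\<lambda>x. - Dy x y) ` X)"
    and cont: "continuous_on S x0" "continuous_on S x1" "continuous_on S y"
    and range: "x0 ` S \<subseteq> X" "x1 ` S \<subseteq> X" "y ` S \<subseteq> Y"
  shows "continuous_on S
           (\<lambda>z. cexp Dy X (y z) (t *\<^sub>R (- Dy (x1 z) (y z)) + (1 - t) *\<^sub>R (- Dy (x0 z) (y z))))"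
proof -
  define p where "p z = t *\<^sub>R (- Dy (x1 z) (y z)) + (1 - t) *\<^sub>R (- Dy (x0 z) (y z))" for z
  have "continuous_on S p"
    unfolding p_def using continuous_on_compose_curried[OF Dy_cont] cont range
    by (intro continuous_intros) auto
  moreover have "(\<lambda>z. (p z, y z)) ` S \<subseteq> (\<lambda>z. (- Dy (fst z) (snd z), snd z)) ` (X \<times> Y)"
  proof clarify
    fix z assume "z \<in> S"
    then have "y z \<in> Y" "x0 z \<in> X" "x1 z \<in> X"
      using range by auto
    then have "p z \<in> (\<lambda>x. - Dy x (y z)) ` X"
      unfolding p_def by (intro c_segment_param_in_image conv assms(3))
    then obtain x where "x \<in> X" "p z = - Dy x (y z)"
      by blast
    with \<open>y z \<in> Y\<close> show "(p z, y z) \<in> (\<lambda>z. (- Dy (fst z) (snd z), snd z)) ` (X \<times> Y)"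
      by (intro image_eqI[of _ _ "(x, y z)"]) auto
  qed
  ultimately show ?thesis
    using continuous_on_compose2[OF continuous_on_cexp[OF assms(1,2) Dy_cont inj]
        continuous_on_Pair[OF _ cont(3)]]
    by (simp add: p_def)
qed

definition loeper_defect ::
    "('a::euclidean_space \<Rightarrow> 'a \<Rightarrow> real) \<Rightarrow> ('a \<Rightarrow> 'a \<Rightarrow> 'a) \<Rightarrow> 'a set \<Rightarrow> real \<Rightarrow>
     'a \<Rightarrow> 'a \<Rightarrow> 'a \<Rightarrow> 'a \<Rightarrow> real" where
  "loeper_defect c Dy X t x0 x1 y0 y =
     (let xt = cexp Dy X y0 (t *\<^sub>R (- Dy x1 y0) + (1 - t) *\<^sub>R (- Dy x0 y0))
      in (- c xt y + c xt y0) - max (- c x0 y + c x0 y0) (- c x1 y + c x1 y0))"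

lemma loeper_iff_defect_nonpos:
  "loeper c Dy X Y \<longleftrightarrow>
     (\<forall>x0\<in>X. \<forall>x1\<in>X. \<forall>y0\<in>Y. \<forall>y\<in>Y. \<forall>t\<in>{0..1}. loeper_defect c Dy X t x0 x1 y0 y \<le> 0)"
  by (simp add: loeper_def loeper_defect_def Let_def)

lemma loeper_defect_endpoints_nonpos:
  assumes "inj_on (\<lambda>x. - Dy x y0) X" "x0 \<in> X" "x1 \<in> X"
  shows "loeper_defect c Dy X 0 x0 x1 y0 y \<le> 0" "loeper_defect c Dy X 1 x0 x1 y0 y \<le> 0"
  using assms by (simp_all add: loeper_defect_def cexp_minus_Dy)

lemma continuous_on_loeper_defect:
  fixes Dy :: "'a::euclidean_space \<Rightarrow> 'a \<Rightarrow> 'a"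
  assumes "compact X" "compact Y" "t \<in> {0..1}"
    and c_cont: "continuous_on (X \<times> Y) (\<lambda>z. c (fst z) (snd z))"
    and Dy_cont: "continuous_on (X \<times> Y) (\<lambda>z. Dy (fst z) (snd z))"
    and inj: "\<And>y. y \<in> Y \<Longrightarrow> inj_on (\<lambda>x. - Dy x y) X"
    and conv: "\<And>y. y \<in> Y \<Longrightarrow> convex ((\<lambda>x. - Dy x y) ` X)"
  shows "continuous_on (X \<times> X \<times> Y \<times> Y) (\<lambda>(x0, x1, y0, y). loeper_defect c Dy X t x0 x1 y0 y)"
proof -
  let ?S = "X \<times> X \<times> Y \<times> Y"
  let ?x_0 = "\<lambda>z::'a \<times> 'a \<times> 'a \<times> 'a. fst z" and ?x_1 = "\<lambda>z. fst (snd z)"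
  let ?y_0 = "\<lambda>z. fst (snd (snd z))" and ?y = "\<lambda>z. snd (snd (snd z))"
  define xt where
    "xt z = cexp Dy X (?y_0 z) (t *\<^sub>R (- Dy (?x_1 z) (?y_0 z)) + (1 - t) *\<^sub>R (- Dy (?x_0 z) (?y_0 z)))"
    for z
  have proj: "continuous_on ?S ?x_0" "continuous_on ?S ?x_1" "continuous_on ?S ?y_0" "continuous_on ?S ?y"
    and proj_in: "?x_0 ` ?S \<subseteq> X" "?x_1 ` ?S \<subseteq> X" "?y_0 ` ?S \<subseteq> Y" "?y ` ?S \<subseteq> Y"
    by (auto intro!: continuous_intros)
  have xt_in: "xt ` ?S \<subseteq> X"
    unfolding xt_def image_subset_iff
    by (intro ballI cexp_in c_segment_param_in_image conv) (use assms(3) in auto)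
  have "continuous_on ?S xt"
    unfolding xt_def
    by (rule continuous_on_cexp_segment[OF assms(1-3) Dy_cont inj conv proj(1-3) proj_in(1-3)])
  then have "continuous_on ?S (\<lambda>z. (- c (xt z) (?y z) + c (xt z) (?y_0 z))
      - max (- c (?x_0 z) (?y z) + c (?x_0 z) (?y_0 z)) (- c (?x_1 z) (?y z) + c (?x_1 z) (?y_0 z)))"
    using continuous_on_compose_curried[OF c_cont] proj proj_in xt_in
    by (intro continuous_intros) auto
  then show ?thesis
    by (simp add: loeper_defect_def xt_def split_def Let_def)
qed

lemma separating_level_of_loeper_defect_pos:
  assumes "loeper_defect c Dy X t x0 x1 y0 y1 > 0"
  shows "\<exists>h. let xt = cexp Dy X y0 (t *\<^sub>R (- Dy x1 y0) + (1 - t) *\<^sub>R (- Dy x0 y0))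
             in - c x0 y1 + h < - c x0 y0 \<and> - c x1 y1 + h < - c x1 y0 \<and> - c xt y1 + h > - c xt y0"
proof -
  define xt where "xt = cexp Dy X y0 (t *\<^sub>R (- Dy x1 y0) + (1 - t) *\<^sub>R (- Dy x0 y0))"
  define v where "v = - c xt y1 + c xt y0"
  define m where "m = max (- c x0 y1 + c x0 y0) (- c x1 y1 + c x1 y0)"
  have "v > m"
    using assms unfolding loeper_defect_def Let_def xt_def[symmetric] v_def m_def by simp
  moreover have "- c x0 y1 + c x0 y0 \<le> m" "- c x1 y1 + c x1 y0 \<le> m"
    by (auto simp: m_def)
  ultimately have "- c x0 y1 + h < - c x0 y0 \<and> - c x1 y1 + h < - c x1 y0 \<and> - c xt y1 + h > - c xt y0"
    if "h = - (v + m) / 2" for h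
    using v_def that by argo
  then show ?thesis
    unfolding Let_def xt_def[symmetric] by blast
qed

theorem lemma5p3:
  fixes X Y :: "'a::euclidean_space set"
    and c :: "'a \<Rightarrow> 'a \<Rightarrow> real"
    and Dx Dy :: "'a \<Rightarrow> 'a \<Rightarrow> 'a"
    and Dxy Dyx :: "'a \<Rightarrow> 'a \<Rightarrow> ('a \<Rightarrow>\<^sub>L 'a)"
  assumes X: "compact X" "interior X \<noteq> {}"
    and Y: "compact Y" "interior Y \<noteq> {}"
    and c_cont: "continuous_on (X \<times> Y) (\<lambda>z. c (fst z) (snd z))"
    and Dx: "\<And>x y. x \<in> X \<Longrightarrow> y \<in> Y \<Longrightarrow>
               ((\<lambda>x'. c x' y) has_derivative (\<lambda>h. Dx x y \<bullet> h)) (at x within X)"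
    and Dy: "\<And>x y. x \<in> X \<Longrightarrow> y \<in> Y \<Longrightarrow>
               ((\<lambda>y'. c x y') has_derivative (\<lambda>h. Dy x y \<bullet> h)) (at y within Y)"
    and Dx_cont: "continuous_on (X \<times> Y) (\<lambda>z. Dx (fst z) (snd z))"
    and Dy_cont: "continuous_on (X \<times> Y) (\<lambda>z. Dy (fst z) (snd z))"
    and Dxy: "\<And>x y. x \<in> X \<Longrightarrow> y \<in> Y \<Longrightarrow>
               ((\<lambda>y'. Dx x y') has_derivative blinfun_apply (Dxy x y)) (at y within Y)"
    and Dyx: "\<And>x y. x \<in> X \<Longrightarrow> y \<in> Y \<Longrightarrow>
               ((\<lambda>x'. Dy x' y) has_derivative blinfun_apply (Dyx x y)) (at x within X)"
    and Dxy_cont: "continuous_on (X \<times> Y) (\<lambda>z. Dxy (fst z) (snd z))"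
    and Dyx_cont: "continuous_on (X \<times> Y) (\<lambda>z. Dyx (fst z) (snd z))"
    and transp: "\<And>x y u v. x \<in> X \<Longrightarrow> y \<in> Y \<Longrightarrow> Dxy x y u \<bullet> v = u \<bullet> Dyx x y v"
    and twist_x: "\<And>x. x \<in> X \<Longrightarrow> inj_on (\<lambda>y. - Dx x y) Y"
    and twist_y: "\<And>y. y \<in> Y \<Longrightarrow> inj_on (\<lambda>x. - Dy x y) X"
    and nondeg: "\<And>x y. x \<in> X \<Longrightarrow> y \<in> Y \<Longrightarrow> bij (blinfun_apply (Dxy x y))"
    and convX: "\<And>y. y \<in> Y \<Longrightarrow> convex ((\<lambda>x. - Dy x y) ` X)"
    and convY: "\<And>x. x \<in> X \<Longrightarrow> convex ((\<lambda>y. - Dx x y) ` Y)"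
    and not_loeper: "\<not> loeper c Dy X Y"
  shows "\<exists>y0 y1 x0 x1 h1' t0.
           y0 \<in> interior Y \<and> y1 \<in> interior Y \<and> x0 \<in> interior X \<and> x1 \<in> interior X \<and>
           t0 \<in> {0<..<1::real} \<and>
           (let xt0 = cexp Dy X y0 (t0 *\<^sub>R (- Dy x1 y0) + (1 - t0) *\<^sub>R (- Dy x0 y0))
            in - c x0 y1 + h1' < - c x0 y0 \<and> - c x1 y1 + h1' < - c x1 y0 \<and>
               - c xt0 y1 + h1' > - c xt0 y0)"
proof -
  from not_loeper obtain a0 a1 b0 b t where
    ab: "a0 \<in> X" "a1 \<in> X" "b0 \<in> Y" "b \<in> Y" "t \<in> {0..1}"
    and pos: "loeper_defect c Dy X t a0 a1 b0 b > 0"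
    unfolding loeper_iff_defect_nonpos by (auto simp: not_le)
  with loeper_defect_endpoints_nonpos[of Dy b0 X a0 a1 c b] twist_y[OF ab(3)]
  have t: "t \<in> {0<..<1}"
    by (cases "t = 0 \<or> t = 1") auto
  have "continuous_on X (\<lambda>x. - Dy x b0)" "continuous_on Y (\<lambda>y. - Dx a0 y)"
    using continuous_on_compose_curried[OF Dy_cont, of X "\<lambda>x. x" "\<lambda>_. b0"]
      continuous_on_compose_curried[OF Dx_cont, of Y "\<lambda>_. a0" "\<lambda>y. y"] ab
    by (auto intro!: continuous_on_minus simp: image_subset_iff)
  then have "closure (interior X) = X" "closure (interior Y) = Y"
    using closure_interior_eq_of_inj_convex_image X Y
      twist_y[OF ab(3)] convX[OF ab(3)] twist_x[OF ab(1)] convY[OF ab(1)]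
    by auto
  then have closure_int: "closure (interior (X \<times> X \<times> Y \<times> Y)) = X \<times> X \<times> Y \<times> Y"
    by (simp add: interior_Times closure_Times)
  have defect_cont: "continuous_on (X \<times> X \<times> Y \<times> Y)
      (\<lambda>(x0, x1, y0, y). loeper_defect c Dy X t x0 x1 y0 y)"
    using continuous_on_loeper_defect[OF X(1) Y(1) ab(5) c_cont Dy_cont twist_y convX] .
  obtain z where "z \<in> interior (X \<times> X \<times> Y \<times> Y)"
    and "(\<lambda>(x0, x1, y0, y). loeper_defect c Dy X t x0 x1 y0 y) z > 0"
    by (rule continuous_on_pos_at_interior_point[OF defect_cont, of "(a0, a1, b0, b)"])
      (use ab pos closure_int in auto)
  moreover obtain x0 x1 y0 y1 where "z = (x0, x1, y0, y1)"
    by (cases z) auto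
  ultimately show ?thesis
    using separating_level_of_loeper_defect_pos t
    by (fastforce simp: interior_Times)
qed

end
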